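(* Let $\mathcal{Q}\subseteq\mathbb{R}^n$ and consider the robotic system $\mathbf{D}(\mathbf{q})\ddot{\mathbf{q}}+\mathbf{C}(\mathbf{q},\dot{\mathbf{q}})\dot{\mathbf{q}}+\mathbf{G}(\mathbf{q})=\mathbf{B}\mathbf{u}$, $\mathbf{u}\in\mathbb{R}^m$. Let $h_0:\mathcal{Q}\to\mathbb{R}$ and $\mathbf{k}_0:\mathcal{Q}\to\mathbb{R}^n$ be continuously differentiable, $\mu>0$, and $$h(\mathbf{q},\dot{\mathbf{q}})=h_0(\mathbf{q})-\frac{1}{2\mu}(\dot{\mathbf{q}}-\mathbf{k}_0(\mathbf{q}))^\top\mathbf{D}(\mathbf{q})(\dot{\mathbf{q}}-\mathbf{k}_0(\mathbf{q})),\qquad \mathcal{C}=\{(\mathbf{q},\dot{\mathbf{q}})\in T\mathcal{Q}:h(\mathbf{q},\dot{\mathbf{q}})\ge0\}.$$ If $h$ is an energy-based control barrier function for the robotic system on $\mathcal{C}$ (with extended class $\mathcal{K}_\infty$ function $\alpha$), then any locally Lipschitz controller $\mathbf{k}:T\mathcal{Q}\to\mathbb{R}^m$ satisfying, for all $(\mathbf{q},\dot{\mathbf{q}})\in T\mathcal{Q}$, $$\tfrac{1}{\mu}(\dot{\mathbf{q}}-\mathbf{k}_0(\mathbf{q}))^\top\Big[\mathbf{D}(\mathbf{q})\tfrac{\partial\mathbf{k}_0}{\partial\mathbf{q}}(\mathbf{q})\dot{\mathbf{q}}+\mathbf{C}(\mathbf{q},\dot{\mathbf{q}})\mathbf{k}_0(\mathbf{q})+\mathbf{G}(\mathbf{q})-\mathbf{B}\mathbf{k}(\mathbf{q},\dot{\mathbf{q}})\Big]+\nabla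 h_0(\mathbf{q})\cdot\dot{\mathbf{q}}\ge-\alpha(h(\mathbf{q},\dot{\mathbf{q}}))$$ renders $\mathcal{C}$ forward invariant for the closed-loop system obtained with $\mathbf{u}=\mathbf{k}(\mathbf{q},\dot{\mathbf{q}})$.
   Context: $\mathbf{D}(\mathbf{q})$ is the positive definite (continuously differentiable) inertia matrix, $\mathbf{C}$ the Coriolis matrix, $\mathbf{G}$ the gravity term, $\mathbf{B}\in\mathbb{R}^{n\times m}$ the actuation matrix; the inertia and Coriolis matrices satisfy the skew-symmetry property $\mathbf{v}^\top(\dot{\mathbf{D}}(\mathbf{q},\dot{\mathbf{q}})-2\mathbf{C}(\mathbf{q},\dot{\mathbf{q}}))\mathbf{v}=0$ for all $(\mathbf{q},\dot{\mathbf{q}})$ and $\mathbf{v}\in\mathbb{R}^n$. An extended class $\mathcal{K}_\infty$ function is a continuous strictly increasing $\alpha:\mathbb{R}\to\mathbb{R}$ with $\alpha(0)=0$ and $\alpha(s)\to\pm\infty$ as $s\to\pm\infty$. $h$ is an energy-based CBF on $\mathcal{C}$ if there is such an $\alpha$ with, for all $(\mathbf{q},\dot{\mathbf{q}})$, $\sup_{\mathbf{u}\in\mathbb{R}^m}\{\tfrac{1}{\mu}(\dot{\mathbf{q}}-\mathbf{k}_0)^\top[\mathbf{D}\tfrac{\partial\mathbf{k}_0}{\partial\mathbf{q}}\dot{\mathbf{q}}+\mathbf{C}\mathbf{k}_0+\mathbf{G}-\mathbf{B}\mathbf{u}]+\nabla h_0\cdot\dot{\mathbf{q}}\}>-\alpha(h)$.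 A set is forward invariant if every closed-loop trajectory starting in it remains in it on its whole maximal interval of existence. *)

theory Defs
  imports "HOL-Analysis.Analysis"
begin

definition ext_class_Kinf :: "(real \<Rightarrow> real) \<Rightarrow> bool" where
  "ext_class_Kinf \<alpha> \<longleftrightarrow> continuous_on UNIV \<alpha> \<and> strict_mono \<alpha> \<and> \<alpha> 0 = 0 \<and>
     filterlim \<alpha> at_top at_top \<and> filterlim \<alpha> at_bot at_bot"

definition pos_def_mat :: "real^'n^'n \<Rightarrow> bool" where
  "pos_def_mat A \<longleftrightarrow> transpose A = A \<and> (\<forall>v. v \<noteq> 0 \<longrightarrow> v \<bullet> (A *v v) > 0)"

definition locally_lipschitz_on :: "'a::metric_space set \<Rightarrow> ('a \<Rightarrow> 'b::metric_space) \<Rightarrow> bool" where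
  "locally_lipschitz_on S f \<longleftrightarrow> (\<forall>x\<in>S. \<exists>e>0. \<exists>L. L-lipschitz_on (cball x e \<inter> S) f)"

definition energy_h ::
  "(real^'n \<Rightarrow> real) \<Rightarrow> (real^'n \<Rightarrow> real^'n) \<Rightarrow> (real^'n \<Rightarrow> real^'n^'n) \<Rightarrow> real
    \<Rightarrow> real^'n \<Rightarrow> real^'n \<Rightarrow> real" where
  "energy_h h0 k0 D \<mu> q qd = h0 q - 1 / (2 * \<mu>) * ((qd - k0 q) \<bullet> (D q *v (qd - k0 q)))"

definition cbf_expr ::
  "(real^'n \<Rightarrow> real^'n) \<Rightarrow> (real^'n \<Rightarrow> real^'n) \<Rightarrow> (real^'n \<Rightarrow> real^'n^'n)
   \<Rightarrow> (real^'n \<Rightarrow> real^'n^'n) \<Rightarrow> (real^'n \<Rightarrow> real^'n \<Rightarrow> real^'n^'n) \<Rightarrow> (real^'n \<Rightarrow> real^'n)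
   \<Rightarrow> real^'m^'n \<Rightarrow> real \<Rightarrow> real^'n \<Rightarrow> real^'n \<Rightarrow> real^'m \<Rightarrow> real" where
  "cbf_expr gh0 k0 Jk0 D C G B \<mu> q qd u =
     (1 / \<mu>) * ((qd - k0 q) \<bullet> (D q *v (Jk0 q *v qd) + C q qd *v k0 q + G q - B *v u))
     + gh0 q \<bullet> qd"

definition energy_cbf ::
  "(real^'n) set \<Rightarrow> (real^'n \<Rightarrow> real) \<Rightarrow> (real^'n \<Rightarrow> real^'n) \<Rightarrow> (real^'n \<Rightarrow> real^'n)
   \<Rightarrow> (real^'n \<Rightarrow> real^'n^'n) \<Rightarrow> (real^'n \<Rightarrow> real^'n^'n) \<Rightarrow> (real^'n \<Rightarrow> real^'n \<Rightarrow> real^'n^'n)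
   \<Rightarrow> (real^'n \<Rightarrow> real^'n) \<Rightarrow> real^'m^'n \<Rightarrow> real \<Rightarrow> (real \<Rightarrow> real) \<Rightarrow> bool" where
  "energy_cbf Q h0 gh0 k0 Jk0 D C G B \<mu> \<alpha> \<longleftrightarrow> ext_class_Kinf \<alpha> \<and>
     (\<forall>q\<in>Q. \<forall>qd. (SUP u. ereal (cbf_expr gh0 k0 Jk0 D C G B \<mu> q qd u))
                    > ereal (- \<alpha> (energy_h h0 k0 D \<mu> q qd)))"

definition closed_loop_solution ::
  "(real^'n) set \<Rightarrow> (real^'n \<Rightarrow> real^'n^'n) \<Rightarrow> (real^'n \<Rightarrow> real^'n \<Rightarrow> real^'n^'n) \<Rightarrow> (real^'n \<Rightarrow> real^'n)
   \<Rightarrow> real^'m^'n \<Rightarrow> ((real^'n) \<times> (real^'n) \<Rightarrow> real^'m) \<Rightarrow> real set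
   \<Rightarrow> (real \<Rightarrow> real^'n) \<Rightarrow> (real \<Rightarrow> real^'n) \<Rightarrow> bool" where
  "closed_loop_solution Q D C G B k I q qd \<longleftrightarrow> is_interval I \<and>
     (\<forall>t\<in>I. q t \<in> Q \<and> (q has_vector_derivative qd t) (at t within I) \<and>
        (\<exists>a. (qd has_vector_derivative a) (at t within I) \<and>
             D (q t) *v a + C (q t) (qd t) *v qd t + G (q t) = B *v k (q t, qd t)))"

definition closed_loop_forward_invariant ::
  "(real^'n) set \<Rightarrow> (real^'n \<Rightarrow> real^'n^'n) \<Rightarrow> (real^'n \<Rightarrow> real^'n \<Rightarrow> real^'n^'n) \<Rightarrow> (real^'n \<Rightarrow> real^'n)
   \<Rightarrow> real^'m^'n \<Rightarrow> ((real^'n) \<times> (real^'n) \<Rightarrow> real^'m) \<Rightarrow> ((real^'n) \<times> (real^'n)) set \<Rightarrow> bool" where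
  "closed_loop_forward_invariant Q D C G B k S \<longleftrightarrow>
     (\<forall>I q qd t0 t. closed_loop_solution Q D C G B k I q qd \<and> t0 \<in> I \<and> (q t0, qd t0) \<in> S
        \<and> t \<in> I \<and> t0 \<le> t \<longrightarrow> (q t, qd t) \<in> S)"

end

theory Submission imports Defs begin

text \<open>Along a closed-loop trajectory, the time derivative of \<open>h\<close> is computed with the
  product rule; the skew-symmetry of \<open>D' - 2 C\<close> removes the term coming from \<open>D'\<close>, and
  substituting the equations of motion turns the derivative into exactly the CBF expression
  evaluated at \<open>u = k(q, q')\<close>, which is at least \<open>-\<alpha>(h)\<close>. Where \<open>h < 0\<close> this bound is
  positive, so \<open>h\<close> cannot become negative: at the last time before a negative value at which
  \<open>h \<ge> 0\<close>, \<open>h\<close> would have to be increasing.\<close>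

lemma bounded_bilinear_matrix_vector_mult:
  "bounded_bilinear (\<lambda>(A::real^'n^'m) (x::real^'n). A *v x)"
  unfolding bilinear_conv_bounded_bilinear[symmetric] bilinear_def
  by (auto simp: linear_iff algebra_simps matrix_vector_mult_scaleR scaleR_matrix_vector_assoc)

lemma symmetric_matrix_inner_commute:
  fixes M :: "real^'n^'n"
  assumes "transpose M = M"
  shows "x \<bullet> (M *v y) = y \<bullet> (M *v x)"
  by (metis assms dot_lmul_matrix inner_commute vector_transpose_matrix)

lemma quadratic_form_has_real_derivative:
  fixes M :: "real \<Rightarrow> real^'n^'n" and e :: "real \<Rightarrow> real^'n"
  assumes dM: "(M has_vector_derivative M') (at t within I)"
    and de: "(e has_vector_derivative e') (at t within I)"
    and sym: "transpose (M t) = M t"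
  shows "((\<lambda>s. e s \<bullet> (M s *v e s)) has_real_derivative
           e t \<bullet> (M' *v e t) + 2 * (e t \<bullet> (M t *v e'))) (at t within I)"
proof -
  have "((\<lambda>s. M s *v e s) has_vector_derivative M t *v e' + M' *v e t) (at t within I)"
    using bounded_bilinear.has_vector_derivative[OF bounded_bilinear_matrix_vector_mult dM de] .
  from bounded_bilinear.has_vector_derivative[OF bounded_bilinear_inner de this]
  have "((\<lambda>s. e s \<bullet> (M s *v e s)) has_real_derivative
          e t \<bullet> (M t *v e' + M' *v e t) + e' \<bullet> (M t *v e t)) (at t within I)"
    by (simp add: has_real_derivative_iff_has_vector_derivative)
  moreover have "e' \<bullet> (M t *v e t) = e t \<bullet> (M t *v e')"
    using symmetric_matrix_inner_commute[OF sym] .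
  ultimately show ?thesis
    by (simp add: inner_add_right algebra_simps)
qed

lemma energy_h_has_real_derivative:
  fixes q qd :: "real \<Rightarrow> real^'n"
  assumes QI: "q ` I \<subseteq> Q" and tI: "t \<in> I"
    and dq: "(q has_vector_derivative qd t) (at t within I)"
    and dqd: "(qd has_vector_derivative a) (at t within I)"
    and D_deriv: "(D has_derivative dD (q t)) (at (q t) within Q)"
    and h0_deriv: "(h0 has_derivative (\<lambda>v. gh0 (q t) \<bullet> v)) (at (q t) within Q)"
    and k0_deriv: "(k0 has_derivative (\<lambda>v. Jk0 (q t) *v v)) (at (q t) within Q)"
    and D_sym: "transpose (D (q t)) = D (q t)"
  shows "((\<lambda>s. energy_h h0 k0 D \<mu> (q s) (qd s)) has_real_derivative
           gh0 (q t) \<bullet> qd t - 1 / (2 * \<mu>) *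
             ((qd t - k0 (q t)) \<bullet> (dD (q t) (qd t) *v (qd t - k0 (q t)))
              + 2 * ((qd t - k0 (q t)) \<bullet> (D (q t) *v (a - Jk0 (q t) *v qd t))))) (at t within I)"
proof -
  have chain: "((f \<circ> q) has_vector_derivative f' (qd t)) (at t within I)"
    if "(f has_derivative f') (at (q t) within Q)" for f :: "real^'n \<Rightarrow> 'b::real_normed_vector" and f'
    using vector_derivative_diff_chain_within[OF dq has_derivative_subset[OF that QI]] .
  have dh0: "((\<lambda>s. h0 (q s)) has_real_derivative gh0 (q t) \<bullet> qd t) (at t within I)"
    using chain[OF h0_deriv] by (simp add: has_real_derivative_iff_has_vector_derivative o_def)
  have de: "((\<lambda>s. qd s - k0 (q s)) has_vector_derivative a - Jk0 (q t) *v qd t) (at t within I)"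
    using has_vector_derivative_diff[OF dqd chain[OF k0_deriv]] by (simp add: o_def)
  show ?thesis
    unfolding energy_h_def
    using chain[OF D_deriv] D_sym
    by (intro DERIV_diff dh0 DERIV_cmult quadratic_form_has_real_derivative[OF _ de])
       (simp_all add: o_def)
qed

lemma energy_rate_eq_cbf_expr:
  fixes M dM Cm :: "real^'n^'n" and B :: "real^'m^'n"
  assumes skew: "(qd - kv) \<bullet> ((dM - 2 *\<^sub>R Cm) *v (qd - kv)) = 0"
    and motion: "M *v a + Cm *v qd + G = B *v u"
    and mu: "\<mu> \<noteq> 0"
  shows "gh \<bullet> qd - 1 / (2 * \<mu>) *
           ((qd - kv) \<bullet> (dM *v (qd - kv)) + 2 * ((qd - kv) \<bullet> (M *v (a - J *v qd))))
         = 1 / \<mu> * ((qd - kv) \<bullet> (M *v (J *v qd) + Cm *v kv + G - B *v u)) + gh \<bullet> qd"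
proof -
  define e where "e = qd - kv"
  have "e \<bullet> (dM *v e) = 2 * (e \<bullet> (Cm *v e))"
    using skew unfolding e_def[symmetric]
    by (simp add: matrix_vector_mult_diff_rdistrib inner_diff_right
        scaleR_matrix_vector_assoc[symmetric])
  also have "Cm *v e = Cm *v qd - Cm *v kv"
    unfolding e_def by (simp add: matrix_vector_mult_diff_distrib)
  finally have "e \<bullet> (dM *v e) + 2 * (e \<bullet> (M *v (a - J *v qd)))
      = -2 * (e \<bullet> (M *v (J *v qd) + Cm *v kv + G - B *v u))"
    by (simp add: matrix_vector_mult_diff_distrib inner_diff_right inner_add_right
        algebra_simps flip: motion)
  then show ?thesis
    using mu unfolding e_def by (simp add: field_simps)
qed

lemma closed_loop_energy_h_has_real_derivative:
  assumes sol: "closed_loop_solution Q D C G B k I q qd" and tI: "t \<in> I"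
    and D_sym: "\<forall>q\<in>Q. transpose (D q) = D q"
    and D_deriv: "\<forall>q\<in>Q. (D has_derivative dD q) (at q within Q)"
    and skew: "\<forall>q\<in>Q. \<forall>qd v. v \<bullet> ((dD q qd - 2 *\<^sub>R C q qd) *v v) = 0"
    and h0_deriv: "\<forall>q\<in>Q. (h0 has_derivative (\<lambda>v. gh0 q \<bullet> v)) (at q within Q)"
    and k0_deriv: "\<forall>q\<in>Q. (k0 has_derivative (\<lambda>v. Jk0 q *v v)) (at q within Q)"
    and mu: "\<mu> \<noteq> 0"
  shows "((\<lambda>s. energy_h h0 k0 D \<mu> (q s) (qd s)) has_real_derivative
           cbf_expr gh0 k0 Jk0 D C G B \<mu> (q t) (qd t) (k (q t, qd t))) (at t within I)"
proof -
  have QI: "q ` I \<subseteq> Q"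
    using sol unfolding closed_loop_solution_def by auto
  from sol tI obtain a where qt: "q t \<in> Q"
    and dq: "(q has_vector_derivative qd t) (at t within I)"
    and dqd: "(qd has_vector_derivative a) (at t within I)"
    and motion: "D (q t) *v a + C (q t) (qd t) *v qd t + G (q t) = B *v k (q t, qd t)"
    unfolding closed_loop_solution_def by blast
  have "transpose (D (q t)) = D (q t)"
    using D_sym qt by blast
  from energy_h_has_real_derivative[where q = q and qd = qd and t = t and dD = dD and
      ?gh0.0 = gh0 and ?Jk0.0 = Jk0 and \<mu> = \<mu>, OF QI tI dq dqd D_deriv[rule_format, OF qt]
      h0_deriv[rule_format, OF qt] k0_deriv[rule_format, OF qt] this]
  show ?thesis
    unfolding cbf_expr_def energy_rate_eq_cbf_expr[where gh = "gh0 (q t)" and J = "Jk0 (q t)",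
        OF skew[rule_format, OF qt, of "qd t - k0 (q t)" "qd t"] motion mu] .
qed

lemma nonneg_invariant_if_deriv_pos_where_neg:
  fixes f f' :: "real \<Rightarrow> real"
  assumes I: "is_interval I"
    and deriv: "\<And>s. s \<in> I \<Longrightarrow> (f has_real_derivative f' s) (at s within I)"
    and pos: "\<And>s. s \<in> I \<Longrightarrow> f s < 0 \<Longrightarrow> f' s > 0"
    and t0I: "t0 \<in> I" and tI: "t \<in> I" and le: "t0 \<le> t" and f_t0: "f t0 \<ge> 0"
  shows "f t \<ge> 0"
proof (rule ccontr)
  assume "\<not> f t \<ge> 0"
  then have f_t: "f t < 0" by simp
  have sub: "{t0..t} \<subseteq> I"
    using I t0I tI unfolding is_interval_1 by (meson atLeastAtMost_iff subsetI)
  have "continuous_on I f"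
    unfolding continuous_on_eq_continuous_within using deriv DERIV_continuous by blast
  then have cont: "continuous_on {t0..t} f"
    using sub by (rule continuous_on_subset)
  define S where "S = {t0..t} \<inter> f -` {0..}"
  have "closed S"
    unfolding S_def by (rule continuous_closed_preimage[OF cont]) auto
  moreover have "t0 \<in> S"
    using f_t0 le unfolding S_def by simp
  moreover have bdd: "bdd_above S"
    unfolding S_def by (rule bdd_aboveI[of _ t]) auto
  ultimately have "Sup S \<in> S"
    using closed_contains_Sup by blast
  \<comment> \<open>the last time in \<open>[t0, t]\<close> at which \<open>f \<ge> 0\<close>\<close>
  then obtain s where "s \<in> S" and s_def: "s = Sup S" by blast
  then have f_s: "f s \<ge> 0" and s_le: "t0 \<le> s" "s \<le> t"
    unfolding S_def by auto
  have st: "s < t"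
    using f_s f_t s_le by (metis order_le_less not_le)
  have "f s < f t"
  proof (rule DERIV_pos_imp_increasing_open[OF st])
    fix x assume x: "s < x" "x < t"
    have "x \<notin> S"
      using x cSup_upper[OF _ bdd] unfolding s_def by fastforce
    then have "f x < 0"
      using x s_le unfolding S_def by auto
    moreover have xI: "x \<in> I"
      using x sub s_le by auto
    moreover have "(f has_real_derivative f' x) (at x)"
    proof -
      have "{s<..<t} \<subseteq> I"
        using sub s_le by auto
      then have "(f has_real_derivative f' x) (at x within {s<..<t})"
        using DERIV_subset[OF deriv[OF xI]] by blast
      then show ?thesis
        using at_within_open[of x "{s<..<t}"] x by simp
    qed
    ultimately show "\<exists>y. (f has_real_derivative y) (at x) \<and> 0 < y"
      using pos by blast
  next
    show "continuous_on {s..t} f"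
      using s_le by (intro continuous_on_subset[OF cont]) auto
  qed
  then show False using f_s f_t by simp
qed

lemma ext_class_Kinf_neg:
  assumes "ext_class_Kinf \<alpha>" and "x < 0"
  shows "\<alpha> x < 0"
  using assms unfolding ext_class_Kinf_def by (metis strict_monoD)

theorem theorem9:
  fixes Q :: "(real^'n) set"
    and D :: "real^'n \<Rightarrow> real^'n^'n" and dD :: "real^'n \<Rightarrow> real^'n \<Rightarrow> real^'n^'n"
    and C :: "real^'n \<Rightarrow> real^'n \<Rightarrow> real^'n^'n" and G :: "real^'n \<Rightarrow> real^'n"
    and B :: "real^'m^'n"
    and h0 :: "real^'n \<Rightarrow> real" and gh0 :: "real^'n \<Rightarrow> real^'n"
    and k0 :: "real^'n \<Rightarrow> real^'n" and Jk0 :: "real^'n \<Rightarrow> real^'n^'n"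
    and \<mu> :: real and \<alpha> :: "real \<Rightarrow> real"
    and k :: "(real^'n) \<times> (real^'n) \<Rightarrow> real^'m"
  assumes D_pd: "\<forall>q\<in>Q. pos_def_mat (D q)"
    and D_deriv: "\<forall>q\<in>Q. (D has_derivative dD q) (at q within Q)"
    and D_C1: "\<forall>v. continuous_on Q (\<lambda>q. dD q v)"
    and skew: "\<forall>q\<in>Q. \<forall>qd v. v \<bullet> ((dD q qd - 2 *\<^sub>R C q qd) *v v) = 0"
    and h0_deriv: "\<forall>q\<in>Q. (h0 has_derivative (\<lambda>v. gh0 q \<bullet> v)) (at q within Q)"
    and h0_C1: "continuous_on Q gh0"
    and k0_deriv: "\<forall>q\<in>Q. (k0 has_derivative (\<lambda>v. Jk0 q *v v)) (at q within Q)"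
    and k0_C1: "continuous_on Q Jk0"
    and mu_pos: "\<mu> > 0"
    and cbf: "energy_cbf Q h0 gh0 k0 Jk0 D C G B \<mu> \<alpha>"
    and k_lip: "locally_lipschitz_on (Q \<times> UNIV) k"
    and k_cond: "\<forall>q\<in>Q. \<forall>qd. cbf_expr gh0 k0 Jk0 D C G B \<mu> q qd (k (q, qd))
                         \<ge> - \<alpha> (energy_h h0 k0 D \<mu> q qd)"
  shows "closed_loop_forward_invariant Q D C G B k
           {(q, qd). q \<in> Q \<and> energy_h h0 k0 D \<mu> q qd \<ge> 0}"
  unfolding closed_loop_forward_invariant_def
proof (intro allI impI, elim conjE)
  fix I q qd t0 t
  assume sol: "closed_loop_solution Q D C G B k I q qd" and t0I: "t0 \<in> I"
    and start: "(q t0, qd t0) \<in> {(q, qd). q \<in> Q \<and> energy_h h0 k0 D \<mu> q qd \<ge> 0}"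
    and tI: "t \<in> I" and le: "t0 \<le> t"
  have QI: "q ` I \<subseteq> Q"
    using sol unfolding closed_loop_solution_def by auto
  have D_sym: "\<forall>q\<in>Q. transpose (D q) = D q"
    using D_pd unfolding pos_def_mat_def by blast
  have Kinf: "ext_class_Kinf \<alpha>"
    using cbf unfolding energy_cbf_def by blast
  define h where "h s = energy_h h0 k0 D \<mu> (q s) (qd s)" for s
  define h' where "h' s = cbf_expr gh0 k0 Jk0 D C G B \<mu> (q s) (qd s) (k (q s, qd s))" for s
  have I: "is_interval I"
    using sol unfolding closed_loop_solution_def by blast
  have deriv: "(h has_real_derivative h' s) (at s within I)" if "s \<in> I" for s
    unfolding h_def h'_def using mu_pos
    by (intro closed_loop_energy_h_has_real_derivative[OF sol that D_sym D_deriv skew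
          h0_deriv k0_deriv]) simp
  have pos: "h' s > 0" if "s \<in> I" and "h s < 0" for s
  proof -
    have "\<alpha> (h s) < 0"
      using ext_class_Kinf_neg[OF Kinf \<open>h s < 0\<close>] .
    moreover have "q s \<in> Q"
      using QI that(1) by blast
    then have "h' s \<ge> - \<alpha> (h s)"
      unfolding h_def h'_def using k_cond by blast
    ultimately show ?thesis by linarith
  qed
  have "h t \<ge> 0"
    using nonneg_invariant_if_deriv_pos_where_neg[OF I deriv pos t0I tI le] start
    unfolding h_def by auto
  then show "(q t, qd t) \<in> {(q, qd). q \<in> Q \<and> energy_h h0 k0 D \<mu> q qd \<ge> 0}"
    using QI tI unfolding h_def by auto
qed

end
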